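(* Let $A\subseteq\mathbb{N}$ and $B,C\in\mathcal{D}$ with $A\cup B\supseteq C$. Then $d(C)-d(B)\le\underline{\underline{d}}(A)$.
   Context: $\mathbb{N}=\{1,2,3,\dots\}$. For $A\subseteq\mathbb{N}$ let $A(n)=|A\cap[1,n]|$. Let $\mathcal{D}$ be the collection of all $A\subseteq\mathbb{N}$ for which the asymptotic density $d(A)=\lim_{n\to\infty}\frac{A(n)}{n}$ exists. Define $\underline{\underline{d}}(A)=\sup\{d(B);\ B\subseteq A,\ B\in\mathcal{D}\}$. *)

theory Defs
  imports "HOL-Analysis.Analysis"
begin

text \<open>Subsets of the positive integers are modelled as sets of naturals not containing 0.\<close>

definition counting :: "nat set \<Rightarrow> nat \<Rightarrow> nat" where
  "counting A n = card (A \<inter> {1..n})"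

definition has_density :: "nat set \<Rightarrow> real \<Rightarrow> bool" where
  "has_density A \<delta> \<longleftrightarrow> ((\<lambda>n. real (counting A n) / real n) \<longlonglongrightarrow> \<delta>)"

definition density_sets :: "nat set set" where
  "density_sets = {A. A \<subseteq> {1..} \<and> (\<exists>\<delta>. has_density A \<delta>)}"

definition density :: "nat set \<Rightarrow> real" where
  "density A = lim (\<lambda>n. real (counting A n) / real n)"

definition inner_density :: "nat set \<Rightarrow> real" where
  "inner_density A = Sup {density B | B. B \<subseteq> A \<and> B \<in> density_sets}"

end

theory Submission
  imports Defs
begin

text \<open>Let \<open>B\<close>, \<open>C\<close> have densities \<open>b < c\<close>. The set \<open>D = C - B\<close> lies in \<open>A\<close>, and every
  interval \<open>(k, n]\<close> contains at least \<open>(c - b)(n - k) - o(n)\<close> of its elements. Choosing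
  elements of \<open>D\<close> greedily, but never letting the count up to \<open>n\<close> exceed \<open>\<lfloor>(c - b) n\<rfloor>\<close>,
  produces a subset of \<open>D\<close> whose count up to \<open>n\<close> falls short of \<open>(c - b) n\<close> only by the
  deficit accumulated since the last time the cap was reached, which is \<open>o(n)\<close>. This subset
  has density exactly \<open>c - b\<close>.\<close>

lemma tendsto_divide_imp_sublinear_error:
  fixes f :: "nat \<Rightarrow> real"
  assumes lim: "(\<lambda>n. f n / real n) \<longlonglongrightarrow> \<delta>" and "\<epsilon> > 0"
  shows "\<exists>K. \<forall>n. \<bar>f n - \<delta> * real n\<bar> \<le> \<epsilon> * real n + K"
proof -
  obtain N where N: "\<And>n. n \<ge> N \<Longrightarrow> \<bar>f n / real n - \<delta>\<bar> < \<epsilon>"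
    using lim \<open>\<epsilon> > 0\<close> unfolding LIMSEQ_def dist_real_def by blast
  define K where "K = (\<Sum>m\<le>N. \<bar>f m - \<delta> * real m\<bar>)"
  have "\<bar>f n - \<delta> * real n\<bar> \<le> \<epsilon> * real n + K" for n
  proof (cases "n \<le> N")
    case True
    have "\<bar>f n - \<delta> * real n\<bar> \<le> K"
      unfolding K_def using True by (intro member_le_sum) auto
    then show ?thesis using \<open>\<epsilon> > 0\<close> by (simp add: add_increasing)
  next
    case False
    then have "\<bar>(f n - \<delta> * real n) / real n\<bar> < \<epsilon>"
      using N[of n] by (simp add: diff_divide_distrib)
    then have "\<bar>f n - \<delta> * real n\<bar> < \<epsilon> * real n"
      using False by (simp add: abs_divide field_simps)
    moreover have "0 \<le> K" unfolding K_def by (simp add: sum_nonneg)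
    ultimately show ?thesis by linarith
  qed
  then show ?thesis by blast
qed

lemma sublinear_error_imp_tendsto_divide:
  fixes f :: "nat \<Rightarrow> real"
  assumes bound: "\<And>\<epsilon>. \<epsilon> > 0 \<Longrightarrow> \<exists>K. \<forall>n. \<bar>f n - \<delta> * real n\<bar> \<le> \<epsilon> * real n + K"
  shows "(\<lambda>n. f n / real n) \<longlonglongrightarrow> \<delta>"
proof (rule LIMSEQ_I)
  fix r :: real assume "r > 0"
  then obtain K where K: "\<And>n. \<bar>f n - \<delta> * real n\<bar> \<le> r / 2 * real n + K"
    using bound[of "r / 2"] by auto
  obtain N :: nat where N: "2 * \<bar>K\<bar> / r < real N"
    using reals_Archimedean2 by blast
  have "\<bar>f n / real n - \<delta>\<bar> < r" if "n \<ge> Suc N" for n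
  proof -
    have "2 * \<bar>K\<bar> < r * real N"
      using N \<open>r > 0\<close> by (simp add: field_simps)
    also have "\<dots> \<le> r * real n"
      using that \<open>r > 0\<close> by simp
    finally have n: "real n > 0" "2 * \<bar>K\<bar> < r * real n"
      using that by auto
    have "\<bar>f n - \<delta> * real n\<bar> < r * real n"
      using K[of n] n abs_ge_self[of K] by linarith
    then show ?thesis using n by (simp add: abs_divide field_simps flip: diff_divide_distrib)
  qed
  then show "\<exists>N. \<forall>n\<ge>N. norm (f n / real n - \<delta>) < r" by auto
qed

lemma tendsto_divide_iff_sublinear_error:
  fixes f :: "nat \<Rightarrow> real"
  shows "(\<lambda>n. f n / real n) \<longlonglongrightarrow> \<delta> \<longleftrightarrow>
         (\<forall>\<epsilon>>0. \<exists>K. \<forall>n. \<bar>f n - \<delta> * real n\<bar> \<le> \<epsilon> * real n + K)"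
  using tendsto_divide_imp_sublinear_error sublinear_error_imp_tendsto_divide by blast

lemma counting_split:
  assumes "k \<le> n"
  shows "counting X n = counting X k + card (X \<inter> {k<..n})"
proof -
  have "X \<inter> {1..n} = (X \<inter> {1..k}) \<union> (X \<inter> {k<..n})" using assms by auto
  moreover have "(X \<inter> {1..k}) \<inter> (X \<inter> {k<..n}) = {}" by auto
  ultimately show ?thesis unfolding counting_def by (simp add: card_Un_disjoint)
qed

lemma counting_Suc:
  "counting X (Suc n) = counting X n + (if Suc n \<in> X then 1 else 0)"
proof -
  have "{n<..Suc n} = {Suc n}" by auto
  then have "X \<inter> {n<..Suc n} = (if Suc n \<in> X then {Suc n} else {})" by auto
  then show ?thesis using counting_split[of n "Suc n" X] by auto
qed

lemma counting_le: "counting X n \<le> n"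
proof -
  have "card (X \<inter> {1..n}) \<le> card {1..n}" by (rule card_mono) auto
  then show ?thesis unfolding counting_def by simp
qed

lemma has_density_iff_counting_error:
  "has_density A \<delta> \<longleftrightarrow>
     (\<forall>\<epsilon>>0. \<exists>K. \<forall>n. \<bar>real (counting A n) - \<delta> * real n\<bar> \<le> \<epsilon> * real n + K)"
  unfolding has_density_def by (rule tendsto_divide_iff_sublinear_error)

lemma density_eqI: "has_density A \<delta> \<Longrightarrow> density A = \<delta>"
  unfolding density_def has_density_def by (rule limI)

lemma density_le_1:
  assumes "has_density A \<delta>"
  shows "density A \<le> 1"
proof -
  have "\<delta> \<le> 1"
    using assms unfolding has_density_def
    by (rule LIMSEQ_le_const2) (auto simp: counting_le divide_le_eq_1)
  then show ?thesis using density_eqI[OF assms] by simp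
qed

lemma inner_density_upper:
  assumes "E \<subseteq> A" "E \<in> density_sets"
  shows "density E \<le> inner_density A"
  unfolding inner_density_def
proof (rule cSup_upper)
  show "density E \<in> {density B |B. B \<subseteq> A \<and> B \<in> density_sets}" using assms by auto
  show "bdd_above {density B |B. B \<subseteq> A \<and> B \<in> density_sets}"
    by (rule bdd_aboveI[of _ 1]) (auto simp: density_sets_def density_le_1)
qed

lemma inner_density_nonneg: "0 \<le> inner_density A"
proof -
  have "has_density {} 0"
    unfolding has_density_def counting_def by simp
  then have "{} \<in> density_sets" "density {} = 0"
    unfolding density_sets_def by (auto intro: density_eqI)
  then show ?thesis using inner_density_upper[of "{}" A] by simp
qed

definition uniform_lower_density :: "nat set \<Rightarrow> real \<Rightarrow> bool" where
  "uniform_lower_density D d \<longleftrightarrow> (\<forall>\<epsilon>>0. \<exists>K. \<forall>k n. k \<le> n \<longrightarrow>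
     d * (real n - real k) - \<epsilon> * real n - K \<le> real (counting D n) - real (counting D k))"

lemma uniform_lower_density_diff:
  assumes C: "has_density C c" and B: "has_density B b"
  shows "uniform_lower_density (C - B) (c - b)"
  unfolding uniform_lower_density_def
proof (intro allI impI)
  fix \<epsilon> :: real assume "\<epsilon> > 0"
  then obtain K1 K2 where
    K1: "\<And>n. \<bar>real (counting C n) - c * real n\<bar> \<le> \<epsilon> / 4 * real n + K1" and
    K2: "\<And>n. \<bar>real (counting B n) - b * real n\<bar> \<le> \<epsilon> / 4 * real n + K2"
    using C B unfolding has_density_iff_counting_error
    by (metis divide_pos_pos zero_less_numeral)
  have "(c - b) * (real n - real k) - \<epsilon> * real n - 2 * (K1 + K2)
          \<le> real (counting (C - B) n) - real (counting (C - B) k)" if "k \<le> n" for k n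
  proof -
    have "card (C \<inter> {k<..n}) \<le> card ((C - B) \<inter> {k<..n} \<union> B \<inter> {k<..n})"
      by (rule card_mono) auto
    also have "\<dots> \<le> card ((C - B) \<inter> {k<..n}) + card (B \<inter> {k<..n})"
      by (rule card_Un_le)
    finally have "real (counting C n) - real (counting C k)
        \<le> real (counting (C - B) n) - real (counting (C - B) k)
          + (real (counting B n) - real (counting B k))"
      using counting_split[OF that] by (simp add: of_nat_diff)
    moreover have "\<epsilon> / 4 * real k \<le> \<epsilon> / 4 * real n"
      using that \<open>\<epsilon> > 0\<close> by simp
    ultimately show ?thesis
      using K1[of n] K1[of k] K2[of n] K2[of k] by (simp add: algebra_simps abs_le_iff)
  qed
  then show "\<exists>K. \<forall>k n. k \<le> n \<longrightarrow> (c - b) * (real n - real k) - \<epsilon> * real n - K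
          \<le> real (counting (C - B) n) - real (counting (C - B) k)" by blast
qed

fun greedy_count :: "real \<Rightarrow> nat set \<Rightarrow> nat \<Rightarrow> nat" where
  "greedy_count d D 0 = 0"
| "greedy_count d D (Suc n) =
     min (nat \<lfloor>d * real (Suc n)\<rfloor>) (greedy_count d D n + (if Suc n \<in> D then 1 else 0))"

definition greedy_subset :: "real \<Rightarrow> nat set \<Rightarrow> nat set" where
  "greedy_subset d D = {Suc n |n. greedy_count d D (Suc n) = Suc (greedy_count d D n)}"

lemma greedy_count_le_floor: "greedy_count d D n \<le> nat \<lfloor>d * real n\<rfloor>"
  by (cases n) auto

lemma greedy_count_upper:
  assumes "d \<ge> 0"
  shows "real (greedy_count d D n) \<le> d * real n"
proof -
  have "int (greedy_count d D n) \<le> \<lfloor>d * real n\<rfloor>"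
    using greedy_count_le_floor[of d D n] assms by (simp add: le_nat_iff)
  then have "real (greedy_count d D n) \<le> real_of_int \<lfloor>d * real n\<rfloor>"
    by (metis of_int_le_iff of_int_of_nat_eq)
  also have "\<dots> \<le> d * real n" by (rule of_int_floor_le)
  finally show ?thesis .
qed

lemma greedy_count_mono_Suc:
  assumes "d \<ge> 0"
  shows "greedy_count d D n \<le> greedy_count d D (Suc n)"
proof -
  have "nat \<lfloor>d * real n\<rfloor> \<le> nat \<lfloor>d * real (Suc n)\<rfloor>"
    using assms by (intro nat_mono floor_mono mult_left_mono) auto
  then show ?thesis using greedy_count_le_floor[of d D n] by simp
qed

lemma greedy_subset_subset: "greedy_subset d D \<subseteq> D"
  unfolding greedy_subset_def by (auto split: if_splits)

lemma greedy_subset_pos: "greedy_subset d D \<subseteq> {1..}"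
  unfolding greedy_subset_def by auto

lemma counting_greedy_subset:
  assumes "d \<ge> 0"
  shows "counting (greedy_subset d D) n = greedy_count d D n"
proof (induction n)
  case 0
  then show ?case by (simp add: counting_def)
next
  case (Suc n)
  have "Suc n \<in> greedy_subset d D \<longleftrightarrow> greedy_count d D (Suc n) = Suc (greedy_count d D n)"
    unfolding greedy_subset_def by auto
  moreover have "greedy_count d D (Suc n) \<le> Suc (greedy_count d D n)"
    by (simp add: min_def)
  ultimately show ?case
    using Suc greedy_count_mono_Suc[OF assms, of D n] counting_Suc[of "greedy_subset d D" n]
    by auto
qed

text \<open>Take for \<open>k\<close> the last time the cap \<open>\<lfloor>d k\<rfloor>\<close> was reached: afterwards every element of
  \<open>D\<close> is taken.\<close>

lemma greedy_count_catch_up: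
  "\<exists>k\<le>n. d * real k - 1 + real (counting D n) - real (counting D k) \<le> real (greedy_count d D n)"
proof (induction n)
  case 0
  then show ?case by simp
next
  case (Suc n)
  then obtain k where k: "k \<le> n"
    "d * real k - 1 + real (counting D n) - real (counting D k) \<le> real (greedy_count d D n)"
    by auto
  show ?case
  proof (cases "greedy_count d D (Suc n) = nat \<lfloor>d * real (Suc n)\<rfloor>")
    case True
    have "d * real (Suc n) - 1 \<le> real (nat \<lfloor>d * real (Suc n)\<rfloor>)"
      by linarith
    then show ?thesis using True by (intro exI[of _ "Suc n"]) auto
  next
    case False
    then have "greedy_count d D (Suc n) = greedy_count d D n + (if Suc n \<in> D then 1 else 0)"
      by (simp add: min_def split: if_splits)
    then show ?thesis using k counting_Suc[of D n]
      by (intro exI[of _ k]) (auto split: if_splits)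
  qed
qed

lemma has_density_greedy_subset:
  assumes "d \<ge> 0" and "uniform_lower_density D d"
  shows "has_density (greedy_subset d D) d"
  unfolding has_density_iff_counting_error counting_greedy_subset[OF assms(1)]
proof (intro allI impI)
  fix \<epsilon> :: real assume "\<epsilon> > 0"
  then obtain K where K: "\<And>k n. k \<le> n \<Longrightarrow>
      d * (real n - real k) - \<epsilon> * real n - K \<le> real (counting D n) - real (counting D k)"
    using assms(2) unfolding uniform_lower_density_def by blast
  have "\<bar>real (greedy_count d D n) - d * real n\<bar> \<le> \<epsilon> * real n + (\<bar>K\<bar> + 1)" for n
  proof -
    obtain k where "k \<le> n"
      "d * real k - 1 + real (counting D n) - real (counting D k) \<le> real (greedy_count d D n)"
      using greedy_count_catch_up by blast
    then have "d * real n - \<epsilon> * real n - K - 1 \<le> real (greedy_count d D n)"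
      using K[of k n] by (simp add: algebra_simps)
    then show ?thesis
      using greedy_count_upper[OF assms(1), of D n] \<open>\<epsilon> > 0\<close> by (simp add: abs_le_iff)
  qed
  then show "\<exists>K. \<forall>n. \<bar>real (greedy_count d D n) - d * real n\<bar> \<le> \<epsilon> * real n + K"
    by blast
qed

theorem lemma3p10:
  fixes A B C :: "nat set"
  assumes "A \<subseteq> {1..}"
    and "B \<in> density_sets" and "C \<in> density_sets"
    and "C \<subseteq> A \<union> B"
  shows "density C - density B \<le> inner_density A"
proof -
  obtain b c where B: "has_density B b" and C: "has_density C c"
    using assms(2,3) unfolding density_sets_def by auto
  show ?thesis
  proof (cases "c \<le> b")
    case True
    then show ?thesis
      using inner_density_nonneg[of A] density_eqI[OF B] density_eqI[OF C] by simp
  next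
    case False
    define E where "E = greedy_subset (c - b) (C - B)"
    have E: "has_density E (c - b)"
      unfolding E_def using False uniform_lower_density_diff[OF C B]
      by (intro has_density_greedy_subset) auto
    then have "E \<in> density_sets"
      unfolding density_sets_def E_def using greedy_subset_pos by auto
    moreover have "E \<subseteq> A"
      unfolding E_def using greedy_subset_subset assms(4) by blast
    ultimately have "density E \<le> inner_density A"
      by (rule inner_density_upper[rotated])
    then show ?thesis using density_eqI[OF E] density_eqI[OF B] density_eqI[OF C] by simp
  qed
qed

end
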